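(* Let $(\mathfrak{g},[\cdot,\ldots,\cdot],\varepsilon,\alpha)$ be an $n$-Hom-Lie color algebra and $\mathcal{P}$ a strict product structure on it. Then $\mathcal{P}$ is a product structure on $\mathfrak{g}$, and, writing $\mathfrak{g}_+=\{x:\mathcal{P}x=x\}$ and $\mathfrak{g}_-=\{x:\mathcal{P}x=-x\}$, for every $1\le i\le n-1$ we have $[a_1,\ldots,a_i,b_{i+1},\ldots,b_n]=0$ for all $a_1,\ldots,a_i\in\mathfrak{g}_+$ and $b_{i+1},\ldots,b_n\in\mathfrak{g}_-$.
   Context: $\mathbb{K}$ is a field of characteristic zero and $\Gamma$ an abelian group. A bicharacter is a map $\varepsilon:\Gamma\times\Gamma\to\mathbb{K}\setminus\{0\}$ with $\varepsilon(a,b)\varepsilon(b,a)=1$, $\varepsilon(a,b+c)=\varepsilon(a,b)\varepsilon(a,c)$, $\varepsilon(a+b,c)=\varepsilon(a,c)\varepsilon(b,c)$. For homogeneous $x,y$, $\varepsilon(x,y)=\varepsilon(|x|,|y|)$ and $\varepsilon(x,y_1+\dots+y_k)=\varepsilon(|x|,|y_1|+\dots+|y_k|)$ ($=1$ for an empty sum). An $n$-Hom-Lie color algebra $(\mathfrak{g},[\cdot,\ldots,\cdot],\varepsilon,\alpha)$ is a $\Gamma$-graded vector space with an $n$-linear bracket of degree zero, a bicharacter $\varepsilon$ and a degree-zero linear map $\alpha$ such that for homogeneous elements: (i) $[x_1,\ldots,x_i,x_{i+1},\ldots,x_n]=-\varepsilon(x_i,x_{i+1})[x_1,\ldots,x_{i+1},x_i,\ldots,x_n]$;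 (ii) $[\alpha(x_1),\ldots,\alpha(x_{n-1}),[y_1,\ldots,y_n]]=\sum_{i=1}^n\varepsilon(x_1+\dots+x_{n-1},y_1+\dots+y_{i-1})[\alpha(y_1),\ldots,\alpha(y_{i-1}),[x_1,\ldots,x_{n-1},y_i],\alpha(y_{i+1}),\ldots,\alpha(y_n)]$. For a degree-zero linear $\mathcal{N}$ set $[\cdot]^0_{\mathcal{N}}=[\cdot]$ and $[x_1,\ldots,x_n]^j_{\mathcal{N}}=\sum_{i_1<\dots<i_j}[x_1,\ldots,\mathcal{N}x_{i_1},\ldots,\mathcal{N}x_{i_j},\ldots,x_n]-\mathcal{N}([x_1,\ldots,x_n]^{j-1}_{\mathcal{N}})$ for $1\le j\le n-1$; $\mathcal{N}$ is a Nijenhuis operator if $\mathcal{N}\alpha=\alpha\mathcal{N}$ and $[\mathcal{N}x_1,\ldots,\mathcal{N}x_n]=\mathcal{N}([x_1,\ldots,x_n]^{n-1}_{\mathcal{N}})$. An almost product structure is a degree-zero linear $\mathcal{P}$ with $\mathcal{P}\neq\pm\mathrm{id}$ and $\mathcal{P}^2=\mathrm{id}$; a product structure is an almost product structure which is a Nijenhuis operator. A degree-zero linear map $\Theta$ is in the centroid if $\Theta\alpha=\alpha\Theta$ and $\Theta([x_1,x_2,\ldots,x_n])=[\Theta x_1,x_2,\ldots,x_n]$ for all $x_i$. A strict product structure is an almost product structure lying in the centroid. *)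

theory Defs
  imports Complex_Main
begin

(* The underlying space g is the whole type 'v, a vector space over 'k via scale.
   Brackets are functions on lists; only lists of length n matter. *)

definition graded_space ::
  "('k::field \<Rightarrow> 'v::ab_group_add \<Rightarrow> 'v) \<Rightarrow> ('g::ab_group_add \<Rightarrow> 'v set) \<Rightarrow> bool" where
  "graded_space scale G \<longleftrightarrow>
     vector_space scale \<and>
     (\<forall>a. module.subspace scale (G a)) \<and>
     (\<forall>v. \<exists>S c. finite S \<and> (\<forall>a\<in>S. c a \<in> G a) \<and> v = sum c S) \<and>
     (\<forall>S c. finite S \<and> (\<forall>a\<in>S. c a \<in> G a) \<and> sum c S = 0 \<longrightarrow> (\<forall>a\<in>S. c a = 0))"

definition bicharacter :: "('g::ab_group_add \<Rightarrow> 'g \<Rightarrow> 'k::field) \<Rightarrow> bool" where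
  "bicharacter eps \<longleftrightarrow>
     (\<forall>a b. eps a b \<noteq> 0) \<and>
     (\<forall>a b. eps a b * eps b a = 1) \<and>
     (\<forall>a b c. eps a (b + c) = eps a b * eps a c) \<and>
     (\<forall>a b c. eps (a + b) c = eps a c * eps b c)"

definition deg0_linear ::
  "('k::field \<Rightarrow> 'v::ab_group_add \<Rightarrow> 'v) \<Rightarrow> ('g \<Rightarrow> 'v set) \<Rightarrow> ('v \<Rightarrow> 'v) \<Rightarrow> bool" where
  "deg0_linear scale G f \<longleftrightarrow> Vector_Spaces.linear scale scale f \<and> (\<forall>a. f ` G a \<subseteq> G a)"

definition swap_adj :: "nat \<Rightarrow> 'a list \<Rightarrow> 'a list" where
  "swap_adj i xs = xs[i := xs ! Suc i, Suc i := xs ! i]"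

definition n_hom_lie_color ::
  "('k::field_char_0 \<Rightarrow> 'v::ab_group_add \<Rightarrow> 'v) \<Rightarrow> ('g::ab_group_add \<Rightarrow> 'v set) \<Rightarrow> nat
    \<Rightarrow> ('v list \<Rightarrow> 'v) \<Rightarrow> ('g \<Rightarrow> 'g \<Rightarrow> 'k) \<Rightarrow> ('v \<Rightarrow> 'v) \<Rightarrow> bool" where
  "n_hom_lie_color scale G n br eps alpha \<longleftrightarrow>
     1 \<le> n \<and> graded_space scale G \<and> bicharacter eps \<and> deg0_linear scale G alpha \<and>
     \<comment> \<open>n-linearity\<close>
     (\<forall>xs i u w. length xs = n \<and> i < n \<longrightarrow>
        br (xs[i := u + w]) = br (xs[i := u]) + br (xs[i := w])) \<and>
     (\<forall>xs i c u. length xs = n \<and> i < n \<longrightarrow>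
        br (xs[i := scale c u]) = scale c (br (xs[i := u]))) \<and>
     \<comment> \<open>degree zero\<close>
     (\<forall>xs ds. length xs = n \<and> length ds = n \<and> (\<forall>i<n. xs ! i \<in> G (ds ! i))
        \<longrightarrow> br xs \<in> G (sum_list ds)) \<and>
     \<comment> \<open>(i) color skew-symmetry\<close>
     (\<forall>xs ds i. length xs = n \<and> length ds = n \<and> (\<forall>k<n. xs ! k \<in> G (ds ! k)) \<and> Suc i < n
        \<longrightarrow> br xs = - scale (eps (ds ! i) (ds ! Suc i)) (br (swap_adj i xs))) \<and>
     \<comment> \<open>(ii) color Hom-Nambu (fundamental) identity\<close>
     (\<forall>xs dx ys dy. length xs = n - 1 \<and> length dx = n - 1 \<and> length ys = n \<and> length dy = n \<and>
        (\<forall>k<n - 1. xs ! k \<in> G (dx ! k)) \<and> (\<forall>k<n. ys ! k \<in> G (dy ! k)) \<longrightarrow>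
        br (map alpha xs @ [br ys]) =
          (\<Sum>i<n. scale (eps (sum_list dx) (sum_list (take i dy)))
             (br (map alpha (take i ys) @ [br (xs @ [ys ! i])] @ map alpha (drop (Suc i) ys)))))"

definition apply_at :: "('v \<Rightarrow> 'v) \<Rightarrow> nat set \<Rightarrow> 'v list \<Rightarrow> 'v list" where
  "apply_at N S xs = map (\<lambda>k. if k \<in> S then N (xs ! k) else xs ! k) [0..<length xs]"

fun nij_bracket ::
  "nat \<Rightarrow> ('v list \<Rightarrow> 'v::ab_group_add) \<Rightarrow> ('v \<Rightarrow> 'v) \<Rightarrow> nat \<Rightarrow> 'v list \<Rightarrow> 'v" where
  "nij_bracket n br N 0 xs = br xs"
| "nij_bracket n br N (Suc j) xs =
     (\<Sum>S\<in>{S. S \<subseteq> {..<n} \<and> card S = Suc j}. br (apply_at N S xs))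
     - N (nij_bracket n br N j xs)"

definition nijenhuis ::
  "('k::field_char_0 \<Rightarrow> 'v::ab_group_add \<Rightarrow> 'v) \<Rightarrow> ('g::ab_group_add \<Rightarrow> 'v set) \<Rightarrow> nat
    \<Rightarrow> ('v list \<Rightarrow> 'v) \<Rightarrow> ('v \<Rightarrow> 'v) \<Rightarrow> ('v \<Rightarrow> 'v) \<Rightarrow> bool" where
  "nijenhuis scale G n br alpha N \<longleftrightarrow>
     deg0_linear scale G N \<and> N \<circ> alpha = alpha \<circ> N \<and>
     (\<forall>xs. length xs = n \<longrightarrow> br (map N xs) = N (nij_bracket n br N (n - 1) xs))"

definition almost_product ::
  "('k::field_char_0 \<Rightarrow> 'v::ab_group_add \<Rightarrow> 'v) \<Rightarrow> ('g::ab_group_add \<Rightarrow> 'v set) \<Rightarrow> ('v \<Rightarrow> 'v) \<Rightarrow> bool" where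
  "almost_product scale G P \<longleftrightarrow>
     deg0_linear scale G P \<and> P \<noteq> id \<and> P \<noteq> (\<lambda>x. - x) \<and> P \<circ> P = id"

definition product_structure ::
  "('k::field_char_0 \<Rightarrow> 'v::ab_group_add \<Rightarrow> 'v) \<Rightarrow> ('g::ab_group_add \<Rightarrow> 'v set) \<Rightarrow> nat
    \<Rightarrow> ('v list \<Rightarrow> 'v) \<Rightarrow> ('v \<Rightarrow> 'v) \<Rightarrow> ('v \<Rightarrow> 'v) \<Rightarrow> bool" where
  "product_structure scale G n br alpha P \<longleftrightarrow>
     almost_product scale G P \<and> nijenhuis scale G n br alpha P"

definition centroid ::
  "('k::field_char_0 \<Rightarrow> 'v::ab_group_add \<Rightarrow> 'v) \<Rightarrow> ('g::ab_group_add \<Rightarrow> 'v set) \<Rightarrow> nat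
    \<Rightarrow> ('v list \<Rightarrow> 'v) \<Rightarrow> ('v \<Rightarrow> 'v) \<Rightarrow> ('v \<Rightarrow> 'v) \<Rightarrow> bool" where
  "centroid scale G n br alpha T \<longleftrightarrow>
     deg0_linear scale G T \<and> T \<circ> alpha = alpha \<circ> T \<and>
     (\<forall>xs. length xs = n \<longrightarrow> T (br xs) = br (xs[0 := T (xs ! 0)]))"

definition strict_product_structure ::
  "('k::field_char_0 \<Rightarrow> 'v::ab_group_add \<Rightarrow> 'v) \<Rightarrow> ('g::ab_group_add \<Rightarrow> 'v set) \<Rightarrow> nat
    \<Rightarrow> ('v list \<Rightarrow> 'v) \<Rightarrow> ('v \<Rightarrow> 'v) \<Rightarrow> ('v \<Rightarrow> 'v) \<Rightarrow> bool" where
  "strict_product_structure scale G n br alpha P \<longleftrightarrow>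
     almost_product scale G P \<and> centroid scale G n br alpha P"

end

theory Submission
  imports Defs
begin

text \<open>
  An element T of the centroid commutes with the bracket in the first slot by definition;
  colour skew-symmetry moves this to every slot for homogeneous arguments, and
  multilinearity over the grading to all arguments. Hence applying T in any k slots
  gives T^k applied to the bracket, so the sums in the definition of the Nijenhuis
  brackets collapse to binomial multiples of T^j [x], and Pascal's rule turns the
  Nijenhuis condition into T^n [x] = T^n [x]. If T fixes one argument and negates
  another, the bracket equals its own negative and vanishes in characteristic zero.
  For a strict product structure P this is the case for brackets of elements of the
  +1 and -1 eigenspaces of P.
\<close>

definition multiadditive :: "nat \<Rightarrow> ('a::ab_group_add list \<Rightarrow> 'b::ab_group_add) \<Rightarrow> bool" where
  "multiadditive n F \<longleftrightarrow> (\<forall>xs i. length xs = n \<and> i < n \<longrightarrow> additive (\<lambda>u. F (xs[i := u])))"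

lemma multiadditiveD:
  "multiadditive n F \<Longrightarrow> length xs = n \<Longrightarrow> i < n \<Longrightarrow> additive (\<lambda>u. F (xs[i := u]))"
  unfolding multiadditive_def by blast

lemma multiadditive_comp:
  assumes "additive T" "multiadditive n F"
  shows "multiadditive n (T \<circ> F)"
  using assms unfolding multiadditive_def additive_def by simp

lemma multiadditive_update_nth:
  assumes F: "multiadditive n F" and T: "additive T" and "j < n"
  shows "multiadditive n (\<lambda>xs. F (xs[j := T (xs ! j)]))"
  unfolding multiadditive_def
proof (intro allI impI)
  fix xs :: "'a list" and i assume i: "length xs = n \<and> i < n"
  show "additive (\<lambda>u. F (xs[i := u, j := T (xs[i := u] ! j)]))"
  proof (cases "i = j")
    case True
    then show ?thesis
      using i additive.add[OF T] additive.add[OF multiadditiveD[OF F]] by (simp add: additive_def)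
  next
    case False
    then have "xs[i := u, j := T (xs[i := u] ! j)] = xs[j := T (xs ! j), i := u]" for u
      by (simp add: list_update_swap)
    then show ?thesis
      using i multiadditiveD[OF F, of "xs[j := T (xs ! j)]" i] by simp
  qed
qed

lemma homogeneous_list_degrees:
  assumes "\<forall>x\<in>set xs. \<exists>d. x \<in> G d"
  obtains ds where "length ds = length xs" "\<forall>k<length xs. xs ! k \<in> G (ds ! k)"
proof
  show "length (map (\<lambda>x. SOME d. x \<in> G d) xs) = length xs" by simp
  show "\<forall>k<length xs. xs ! k \<in> G (map (\<lambda>x. SOME d. x \<in> G d) xs ! k)"
    using assms by (auto intro: someI_ex)
qed

text \<open>Induction on the number of leading slots whose arguments may be inhomogeneous.\<close>

lemma multiadditive_eq_if_eq_on_homogeneous: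
  assumes graded: "graded_space scale G"
    and F: "multiadditive n F" and H: "multiadditive n H"
    and hom: "\<And>xs. length xs = n \<Longrightarrow> \<forall>x\<in>set xs. \<exists>d. x \<in> G d \<Longrightarrow> F xs = H xs"
    and "length xs = n"
  shows "F xs = H xs"
proof -
  have decompose: "\<exists>S c. finite S \<and> (\<forall>a\<in>S. c a \<in> G a) \<and> v = sum c S" for v
    using graded unfolding graded_space_def by blast
  have "F xs = H xs" if "k \<le> n" "length xs = n" "\<forall>p\<in>{k..<n}. \<exists>d. xs ! p \<in> G d" for k xs
    using that
  proof (induction k arbitrary: xs)
    case 0
    then show ?case by (intro hom) (auto simp: in_set_conv_nth)
  next
    case (Suc k)
    obtain S c where S: "finite S" "\<forall>a\<in>S. c a \<in> G a" and xk: "xs ! k = sum c S"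
      using decompose by blast
    have k: "k < n" using Suc.prems by simp
    have summand: "F (xs[k := c a]) = H (xs[k := c a])" if "a \<in> S" for a
      using Suc.prems k S(2) that by (intro Suc.IH) (auto simp: nth_list_update)
    have "F xs = F (xs[k := sum c S])" by (simp add: xk[symmetric])
    also have "\<dots> = (\<Sum>a\<in>S. F (xs[k := c a]))"
      using additive.sum[OF multiadditiveD[OF F Suc.prems(2) k]] .
    also have "\<dots> = (\<Sum>a\<in>S. H (xs[k := c a]))" using summand by simp
    also have "\<dots> = H (xs[k := sum c S])"
      using additive.sum[OF multiadditiveD[OF H Suc.prems(2) k]] by (rule sym)
    finally show ?case by (simp add: xk[symmetric])
  qed
  from this[of n] show ?thesis using \<open>length xs = n\<close> by simp
qed

lemma length_swap_adj [simp]: "length (swap_adj i xs) = length xs"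
  by (simp add: swap_adj_def)

lemma nth_swap_adj:
  "Suc i < length xs \<Longrightarrow> k < length xs \<Longrightarrow>
    swap_adj i xs ! k = (if k = i then xs ! Suc i else if k = Suc i then xs ! i else xs ! k)"
  by (simp add: swap_adj_def nth_list_update)

lemma swap_adj_update_Suc:
  "Suc i < length xs \<Longrightarrow> swap_adj i (xs[Suc i := v]) = (swap_adj i xs)[i := v]"
  by (rule nth_equalityI) (simp_all add: nth_swap_adj nth_list_update)

lemma apply_at_empty: "apply_at N {} xs = xs"
  by (rule nth_equalityI) (simp_all add: apply_at_def)

lemma apply_at_lessThan: "apply_at N {..<length xs} xs = map N xs"
  by (rule nth_equalityI) (simp_all add: apply_at_def)

lemma apply_at_insert:
  "j < length xs \<Longrightarrow> j \<notin> S \<Longrightarrow>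
    apply_at N (insert j S) xs = (apply_at N S xs)[j := N (apply_at N S xs ! j)]"
  by (rule nth_equalityI) (auto simp: apply_at_def nth_list_update)

lemma deg0_linear_additive:
  assumes "deg0_linear scale G T"
  shows "additive T"
proof -
  have "module_hom scale scale T"
    using assms unfolding deg0_linear_def linear_iff_module_hom by blast
  then show ?thesis by (simp add: additive_def module_hom.add)
qed

lemma deg0_linear_scale: "deg0_linear scale G T \<Longrightarrow> T (scale c x) = scale c (T x)"
  unfolding deg0_linear_def by (simp add: linear_iff_module_hom module_hom.scale)

lemma deg0_linear_degree: "deg0_linear scale G T \<Longrightarrow> x \<in> G d \<Longrightarrow> T x \<in> G d"
  unfolding deg0_linear_def by blast

lemma n_hom_lie_color_graded: "n_hom_lie_color scale G n br eps alpha \<Longrightarrow> graded_space scale G"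
  unfolding n_hom_lie_color_def by blast

lemma n_hom_lie_color_vector_space: "n_hom_lie_color scale G n br eps alpha \<Longrightarrow> vector_space scale"
  unfolding n_hom_lie_color_def graded_space_def by blast

lemma n_hom_lie_color_Suc:
  assumes "n_hom_lie_color scale G n br eps alpha"
  obtains m where "n = Suc m"
  using assms unfolding n_hom_lie_color_def by (cases n) auto

lemma n_hom_lie_color_multiadditive: "n_hom_lie_color scale G n br eps alpha \<Longrightarrow> multiadditive n br"
  unfolding n_hom_lie_color_def multiadditive_def additive_def by simp

lemma n_hom_lie_color_skew:
  "n_hom_lie_color scale G n br eps alpha \<Longrightarrow> length xs = n \<Longrightarrow> length ds = n \<Longrightarrow>
    \<forall>k<n. xs ! k \<in> G (ds ! k) \<Longrightarrow> Suc i < n \<Longrightarrow>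
    br xs = - scale (eps (ds ! i) (ds ! Suc i)) (br (swap_adj i xs))"
  unfolding n_hom_lie_color_def by blast

lemma centroid_deg0_linear: "centroid scale G n br alpha T \<Longrightarrow> deg0_linear scale G T"
  unfolding centroid_def by blast

lemma centroid_bracket_update_0:
  "centroid scale G n br alpha T \<Longrightarrow> length xs = n \<Longrightarrow> T (br xs) = br (xs[0 := T (xs ! 0)])"
  unfolding centroid_def by blast

lemma vector_space_add_self_eq_0:
  fixes scale :: "'k::field_char_0 \<Rightarrow> 'v::ab_group_add \<Rightarrow> 'v"
    and x :: 'v
  assumes "vector_space scale" and "x + x = 0"
  shows "x = 0"
proof -
  interpret vector_space scale by fact
  have "scale 2 x = x + x"
    by (simp only: one_add_one[symmetric] scale_left_distrib scale_one)
  then show ?thesis using assms(2) by simp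
qed

lemma centroid_bracket_update_nth_homogeneous:
  assumes lie: "n_hom_lie_color scale G n br eps alpha"
    and cent: "centroid scale G n br alpha T"
    and "length xs = n" "length ds = n" "\<forall>k<n. xs ! k \<in> G (ds ! k)" "j < n"
  shows "T (br xs) = br (xs[j := T (xs ! j)])"
  using assms(3-)
proof (induction j arbitrary: xs ds)
  case 0
  then show ?case using centroid_bracket_update_0[OF cent] by simp
next
  case (Suc j)
  have lin: "deg0_linear scale G T" using centroid_deg0_linear[OF cent] .
  define e where "e = eps (ds ! j) (ds ! Suc j)"
  define ys where "ys = xs[Suc j := T (xs ! Suc j)]"
  have ys_degrees: "\<forall>k<n. ys ! k \<in> G (ds ! k)"
    using Suc.prems deg0_linear_degree[OF lin] by (auto simp: ys_def nth_list_update)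
  have swap_degrees: "\<forall>k<n. swap_adj j xs ! k \<in> G (swap_adj j ds ! k)"
    using Suc.prems by (simp add: nth_swap_adj)
  have swap_ys: "swap_adj j ys = (swap_adj j xs)[j := T (swap_adj j xs ! j)]"
    using Suc.prems by (simp add: ys_def swap_adj_update_Suc nth_swap_adj)
  have "T (br xs) = T (- scale e (br (swap_adj j xs)))"
    using n_hom_lie_color_skew[OF lie Suc.prems(1-3)] Suc.prems(4) by (simp add: e_def)
  also have "\<dots> = - scale e (T (br (swap_adj j xs)))"
    using additive.minus[OF deg0_linear_additive[OF lin]] deg0_linear_scale[OF lin] by simp
  also have "\<dots> = - scale e (br (swap_adj j ys))"
    using Suc.IH[of "swap_adj j xs" "swap_adj j ds"] Suc.prems swap_degrees swap_ys by simp
  also have "\<dots> = br ys"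
    using n_hom_lie_color_skew[OF lie _ Suc.prems(2) ys_degrees] Suc.prems
    by (simp add: e_def ys_def)
  finally show ?case by (simp add: ys_def)
qed

lemma centroid_bracket_update_nth:
  assumes lie: "n_hom_lie_color scale G n br eps alpha"
    and cent: "centroid scale G n br alpha T"
    and "length xs = n" "j < n"
  shows "T (br xs) = br (xs[j := T (xs ! j)])"
proof -
  have T: "additive T" using deg0_linear_additive[OF centroid_deg0_linear[OF cent]] .
  have br: "multiadditive n br" using n_hom_lie_color_multiadditive[OF lie] .
  show ?thesis
  proof (rule multiadditive_eq_if_eq_on_homogeneous[where F = "T \<circ> br", simplified])
    show "graded_space scale G" using n_hom_lie_color_graded[OF lie] .
    show "multiadditive n (T \<circ> br)" using multiadditive_comp[OF T br] .
    show "multiadditive n (\<lambda>xs. br (xs[j := T (xs ! j)]))"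
      using multiadditive_update_nth[OF br T \<open>j < n\<close>] .
    fix ys assume "length ys = n" "\<forall>y\<in>set ys. \<exists>d. y \<in> G d"
    then show "T (br ys) = br (ys[j := T (ys ! j)])"
      using centroid_bracket_update_nth_homogeneous[OF lie cent] \<open>j < n\<close>
      by (metis homogeneous_list_degrees)
  qed fact
qed

lemma centroid_bracket_apply_at:
  assumes lie: "n_hom_lie_color scale G n br eps alpha"
    and cent: "centroid scale G n br alpha T"
    and "S \<subseteq> {..<n}" "length xs = n"
  shows "br (apply_at T S xs) = (T ^^ card S) (br xs)"
proof -
  have "finite S" using assms(3) finite_subset by blast
  then show ?thesis
    using assms(3)
  proof (induction S rule: finite_induct)
    case empty
    then show ?case by (simp add: apply_at_empty)
  next
    case (insert j S)
    have j: "j < n" using insert.prems by simp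
    have "br (apply_at T (insert j S) xs) = br ((apply_at T S xs)[j := T (apply_at T S xs ! j)])"
      using apply_at_insert[of j xs S T] j insert.hyps \<open>length xs = n\<close> by simp
    also have "\<dots> = T (br (apply_at T S xs))"
      using centroid_bracket_update_nth[OF lie cent, of "apply_at T S xs" j] j \<open>length xs = n\<close>
      by (simp add: apply_at_def)
    finally show ?case using insert by simp
  qed
qed

lemma centroid_nij_bracket:
  assumes lie: "n_hom_lie_color scale G n br eps alpha"
    and cent: "centroid scale G n br alpha T"
    and xs: "length xs = n"
  shows "nij_bracket n br T j xs = scale (of_nat (n - 1 choose j)) ((T ^^ j) (br xs))"
proof -
  interpret vector_space scale using n_hom_lie_color_vector_space[OF lie] .
  obtain m where m: "n = Suc m" using n_hom_lie_color_Suc[OF lie] .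
  show ?thesis
  proof (induction j)
    case 0
    show ?case by simp
  next
    case (Suc j)
    let ?y = "(T ^^ Suc j) (br xs)"
    let ?A = "{S. S \<subseteq> {..<n} \<and> card S = Suc j}"
    have "(\<Sum>S\<in>?A. br (apply_at T S xs)) = (\<Sum>S\<in>?A. ?y)"
      using centroid_bracket_apply_at[OF lie cent _ xs] by simp
    also have "\<dots> = scale (of_nat (n choose Suc j)) ?y"
      by (simp add: sum_constant_scale n_subsets)
    finally have sum: "(\<Sum>S\<in>?A. br (apply_at T S xs)) = scale (of_nat (n choose Suc j)) ?y" .
    have "T (nij_bracket n br T j xs) = scale (of_nat (m choose j)) ?y"
      using Suc.IH m deg0_linear_scale[OF centroid_deg0_linear[OF cent]] by simp
    then have "nij_bracket n br T (Suc j) xs =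
        scale (of_nat (n choose Suc j)) ?y - scale (of_nat (m choose j)) ?y"
      using sum by simp
    also have "\<dots> = scale (of_nat (m choose Suc j)) ?y"
      using m by (simp add: scale_left_distrib)
    finally show ?case using m by simp
  qed
qed

lemma centroid_nijenhuis:
  fixes T :: "'v::ab_group_add \<Rightarrow> 'v"
  assumes lie: "n_hom_lie_color scale G n br eps alpha"
    and cent: "centroid scale G n br alpha T"
  shows "nijenhuis scale G n br alpha T"
  unfolding nijenhuis_def
proof (intro conjI allI impI)
  show "deg0_linear scale G T" using centroid_deg0_linear[OF cent] .
  show "T \<circ> alpha = alpha \<circ> T" using cent unfolding centroid_def by blast
  interpret vector_space scale using n_hom_lie_color_vector_space[OF lie] .
  fix xs :: "'v list" assume xs: "length xs = n"
  obtain m where m: "n = Suc m"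
    using n_hom_lie_color_Suc[OF lie] .
  have "br (map T xs) = br (apply_at T {..<n} xs)" using apply_at_lessThan[of T xs] xs by simp
  also have "\<dots> = (T ^^ n) (br xs)" using centroid_bracket_apply_at[OF lie cent _ xs] by simp
  also have "\<dots> = T (nij_bracket n br T (n - 1) xs)"
    using centroid_nij_bracket[OF lie cent xs] m by simp
  finally show "br (map T xs) = T (nij_bracket n br T (n - 1) xs)" .
qed

lemma centroid_bracket_eq_0_if_fixed_and_negated:
  assumes lie: "n_hom_lie_color scale G n br eps alpha"
    and cent: "centroid scale G n br alpha T"
    and "length xs = n" "i < n" "j < n"
    and fixed: "T (xs ! i) = xs ! i" and negated: "T (xs ! j) = - xs ! j"
  shows "br xs = 0"
proof (rule vector_space_add_self_eq_0)
  show "vector_space scale" using n_hom_lie_color_vector_space[OF lie] .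
  have "br xs = T (br xs)"
    using centroid_bracket_update_nth[OF lie cent, of xs i] assms(3,4) fixed by simp
  also have "\<dots> = br (xs[j := - xs ! j])"
    using centroid_bracket_update_nth[OF lie cent, of xs j] assms(3,5) negated by simp
  also have "\<dots> = - br xs"
    using additive.minus[OF multiadditiveD[OF n_hom_lie_color_multiadditive[OF lie]], of xs j]
      assms(3,5) by simp
  finally show "br xs + br xs = 0" by (metis add.right_inverse)
qed

theorem lemma6p10:
  fixes scale :: "'k::field_char_0 \<Rightarrow> 'v::ab_group_add \<Rightarrow> 'v"
    and G :: "'g::ab_group_add \<Rightarrow> 'v set"
    and n :: nat and br :: "'v list \<Rightarrow> 'v" and eps :: "'g \<Rightarrow> 'g \<Rightarrow> 'k"
    and alpha P :: "'v \<Rightarrow> 'v"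
  assumes "n_hom_lie_color scale G n br eps alpha"
    and "strict_product_structure scale G n br alpha P"
  shows "product_structure scale G n br alpha P \<and>
    (\<forall>i. 1 \<le> i \<and> i \<le> n - 1 \<longrightarrow>
       (\<forall>as bs. length as = i \<and> length bs = n - i \<and>
          (\<forall>a\<in>set as. P a = a) \<and> (\<forall>b\<in>set bs. P b = - b) \<longrightarrow> br (as @ bs) = 0))"
proof (intro conjI allI impI)
  have cent: "centroid scale G n br alpha P"
    using assms(2) unfolding strict_product_structure_def by blast
  show "product_structure scale G n br alpha P"
    using assms(2) centroid_nijenhuis[OF assms(1) cent]
    unfolding product_structure_def strict_product_structure_def by blast
  fix i as bs
  assume "1 \<le> i \<and> i \<le> n - 1"
    and "length as = i \<and> length bs = n - i \<and> (\<forall>a\<in>set as. P a = a) \<and> (\<forall>b\<in>set bs. P b = - b)"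
  then show "br (as @ bs) = 0"
    by (intro centroid_bracket_eq_0_if_fixed_and_negated[OF assms(1) cent, of _ 0 "n - 1"])
      (auto simp: nth_append)
qed

end
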